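(* Let $G$ be a group, $S\subset G$ a symmetric determining set, and $H\triangleleft G$ a normal subgroup of finite index. If $S$ intersects each coset of $H$ in $G$, then $(S^3\cap H)^2$ is a determining set of $H$.
   Context: $S^k:=\{s_1\cdots s_k: s_j\in S\}$. A generating subset $S$ of a group $G$ containing the identity is a determining set if $G$ has a presentation $\langle S\mid\mathcal{R}\rangle$ in which every relator is a word of length $3$ in the letters $S\cup S^{-1}$. *)

theory Defs
  imports "HOL-Algebra.Algebra"
begin

text \<open>Words in the letters S \<union> S^-1: a letter is a pair (s, b) with s a generator;
  b = True means the formal inverse of s.\<close>

definition letter_val :: "('a, 'b) monoid_scheme \<Rightarrow> 'a \<times> bool \<Rightarrow> 'a" where
  "letter_val G l = (if snd l then inv\<^bsub>G\<^esub> (fst l) else fst l)"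

definition eval_word :: "('a, 'b) monoid_scheme \<Rightarrow> ('a \<times> bool) list \<Rightarrow> 'a" where
  "eval_word G w = foldr (\<lambda>l x. letter_val G l \<otimes>\<^bsub>G\<^esub> x) w \<one>\<^bsub>G\<^esub>"

definition words_over :: "'a set \<Rightarrow> ('a \<times> bool) list set" where
  "words_over S = {w. set w \<subseteq> S \<times> UNIV}"

definition pres_step :: "('a \<times> bool) list set \<Rightarrow> ('a \<times> bool) list \<Rightarrow> ('a \<times> bool) list \<Rightarrow> bool" where
  "pres_step R w w' \<longleftrightarrow> (\<exists>u v.
      w' = u @ v \<and>
      ((\<exists>a b. w = u @ [(a, b), (a, \<not> b)] @ v) \<or> (\<exists>r\<in>R. w = u @ r @ v)))"

text \<open>Equality in the group \<langle>S | R\<rangle> (free group on S modulo the normal closure of R):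
  the equivalence closure of the elementary steps.\<close>

definition pres_equiv :: "('a \<times> bool) list set \<Rightarrow> ('a \<times> bool) list \<Rightarrow> ('a \<times> bool) list \<Rightarrow> bool" where
  "pres_equiv R = (\<lambda>x y. pres_step R x y \<or> pres_step R y x)\<^sup>*\<^sup>*"

definition is_presentation :: "('a, 'b) monoid_scheme \<Rightarrow> 'a set \<Rightarrow> ('a \<times> bool) list set \<Rightarrow> bool" where
  "is_presentation G S R \<longleftrightarrow> S \<subseteq> carrier G \<and> R \<subseteq> words_over S \<and>
     generate G S = carrier G \<and>
     (\<forall>w\<in>words_over S. \<forall>w'\<in>words_over S. eval_word G w = eval_word G w' \<longleftrightarrow> pres_equiv R w w')"

definition determining_set :: "('a, 'b) monoid_scheme \<Rightarrow> 'a set \<Rightarrow> bool" where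
  "determining_set G S \<longleftrightarrow> S \<subseteq> carrier G \<and> \<one>\<^bsub>G\<^esub> \<in> S \<and> generate G S = carrier G \<and>
     (\<exists>R. (\<forall>r\<in>R. length r = 3) \<and> is_presentation G S R)"

end

theory Submission
  imports Defs
begin

(* Reidemeister-Schreier rewriting. Pick for every g a representative rep g in S \<inter> H g, with
   rep h = 1 for h in H. A word s_1 ... s_n over S is rewritten into the word whose i-th letter is
   the Schreier generator rep(g) s_i rep(g s_i)^-1, where g is the value of the prefix s_1 ... s_(i-1);
   every such letter lies in K = S^3 \<inter> H. The rewriting sends a cancelling pair to a word of
   length 2 and a relator of length 3 to a word of length 3, both of value 1, so it maps
   equivalence modulo the relators of S to equivalence modulo the "triangles" of T = K^2, i.e. the
   words of length 3 over T of value 1. Conversely every letter of T is a product of two elements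
   of K, hence the value of a word of length 6 over S, and rewriting this word from a point of H
   gives back the letter modulo triangles: since rep = 1 on H, the product of the first two Schreier
   generators of each half lies again in K. So two words over T of the same value are equivalent
   modulo triangles. Normality of H and finiteness of its index are not needed. *)

section \<open>Words and presentations\<close>

lemma letter_val_False [simp]: "letter_val G (x, False) = x"
  by (simp add: letter_val_def)

lemma letter_val_True [simp]: "letter_val G (x, True) = inv\<^bsub>G\<^esub> x"
  by (simp add: letter_val_def)

lemma eval_word_Nil [simp]: "eval_word G [] = \<one>\<^bsub>G\<^esub>"
  by (simp add: eval_word_def)

lemma eval_word_Cons [simp]: "eval_word G (l # w) = letter_val G l \<otimes>\<^bsub>G\<^esub> eval_word G w"
  by (simp add: eval_word_def)

lemma words_over_Nil [simp]: "[] \<in> words_over A"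
  by (simp add: words_over_def)

lemma words_over_Cons [simp]: "l # w \<in> words_over A \<longleftrightarrow> fst l \<in> A \<and> w \<in> words_over A"
  by (cases l) (auto simp: words_over_def)

lemma words_over_append [simp]: "u @ w \<in> words_over A \<longleftrightarrow> u \<in> words_over A \<and> w \<in> words_over A"
  by (auto simp: words_over_def)

lemma words_over_mono: "w \<in> words_over A \<Longrightarrow> A \<subseteq> B \<Longrightarrow> w \<in> words_over B"
  by (auto simp: words_over_def)

lemma filter_in_words_over [simp]: "filter (\<lambda>l. fst l \<in> A) w \<in> words_over A"
  by (auto simp: words_over_def)

lemma filter_words_over_id: "w \<in> words_over A \<Longrightarrow> filter (\<lambda>l. fst l \<in> A) w = w"
  by (induction w) auto

lemma pres_equiv_refl [simp]: "pres_equiv R x x"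
  by (simp add: pres_equiv_def)

lemma pres_equiv_sym: "pres_equiv R x y \<Longrightarrow> pres_equiv R y x"
  unfolding pres_equiv_def
  by (induction rule: rtranclp_induct) (auto intro: converse_rtranclp_into_rtranclp)

lemma pres_equiv_trans: "pres_equiv R x y \<Longrightarrow> pres_equiv R y z \<Longrightarrow> pres_equiv R x z"
  unfolding pres_equiv_def by (rule rtranclp_trans)

lemma equivp_pres_equiv: "equivp (pres_equiv R)"
  by (intro equivpI reflpI sympI transpI) (auto intro: pres_equiv_sym pres_equiv_trans)

lemma pres_equiv_if_step: "pres_step R x y \<Longrightarrow> pres_equiv R x y"
  by (auto simp: pres_equiv_def)

lemma pres_equiv_map:
  assumes "equivp Q" and "\<And>x y. pres_step R x y \<Longrightarrow> Q (f x) (f y)" and "pres_equiv R x y"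
  shows "Q (f x) (f y)"
  using assms(3) unfolding pres_equiv_def
proof (induction rule: rtranclp_induct)
  case base
  show ?case using equivp_reflp[OF assms(1)] .
next
  case (step y z)
  then have "Q (f y) (f z)"
    using assms(2) equivp_symp[OF assms(1)] by blast
  with step.IH show ?case using equivp_transp[OF assms(1)] by blast
qed

lemma pres_step_append_context: "pres_step R x y \<Longrightarrow> pres_step R (u @ x @ v) (u @ y @ v)"
  unfolding pres_step_def by (metis append.assoc)

lemma pres_equiv_append:
  assumes "pres_equiv R x x'" and "pres_equiv R y y'"
  shows "pres_equiv R (x @ y) (x' @ y')"
proof -
  have "pres_equiv R (u @ x @ v) (u @ x' @ v)" if "pres_equiv R x x'" for u v x x'
    by (rule pres_equiv_map[OF equivp_pres_equiv _ that])
      (rule pres_equiv_if_step[OF pres_step_append_context])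
  then show ?thesis
    using assms pres_equiv_trans by (metis append.left_neutral append.right_neutral)
qed

lemma pres_stepE:
  assumes "pres_step R x y"
  obtains (cancel) u v a b where "x = u @ [(a, b), (a, \<not> b)] @ v" "y = u @ v"
    | (relator) u v r where "r \<in> R" "x = u @ r @ v" "y = u @ v"
  using assms unfolding pres_step_def by blast

lemma pres_equiv_cancel: "pres_equiv R [(a, b), (a, \<not> b)] []"
  by (rule pres_equiv_if_step) (auto simp: pres_step_def)

lemma pres_equiv_relator: "r \<in> R \<Longrightarrow> pres_equiv R r []"
  by (rule pres_equiv_if_step) (force simp: pres_step_def)

lemma presentation_relator_eval:
  assumes "is_presentation G S R" and "r \<in> R"
  shows "eval_word G r = \<one>\<^bsub>G\<^esub>"
proof -
  have "r \<in> words_over S" using assms unfolding is_presentation_def by blast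
  then show ?thesis
    using assms pres_equiv_relator[OF assms(2)] unfolding is_presentation_def
    by (metis eval_word_Nil words_over_Nil)
qed

definition triangle_relators :: "('a, 'b) monoid_scheme \<Rightarrow> 'a set \<Rightarrow> ('a \<times> bool) list set" where
  "triangle_relators G A = {r \<in> words_over A. length r = 3 \<and> eval_word G r = \<one>\<^bsub>G\<^esub>}"

context group
begin

lemma inv_mult_cancel_left [simp]: "x \<in> carrier G \<Longrightarrow> y \<in> carrier G \<Longrightarrow> inv x \<otimes> (x \<otimes> y) = y"
  by (simp add: m_assoc [symmetric])

lemma letter_val_closed [simp]: "fst l \<in> carrier G \<Longrightarrow> letter_val G l \<in> carrier G"
  by (simp add: letter_val_def)

lemma letter_val_in_inv_closed:
  "fst l \<in> A \<Longrightarrow> (\<And>a. a \<in> A \<Longrightarrow> inv a \<in> A) \<Longrightarrow> letter_val G l \<in> A"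
  by (simp add: letter_val_def)

lemma letter_val_cancel: "a \<in> carrier G \<Longrightarrow> letter_val G (a, b) \<otimes> letter_val G (a, \<not> b) = \<one>"
  by (cases b) auto

lemma eval_word_closed [simp]: "w \<in> words_over (carrier G) \<Longrightarrow> eval_word G w \<in> carrier G"
  by (induction w) auto

lemma eval_word_append:
  "u \<in> words_over (carrier G) \<Longrightarrow> w \<in> words_over (carrier G) \<Longrightarrow>
    eval_word G (u @ w) = eval_word G u \<otimes> eval_word G w"
  by (induction u) (auto simp: m_assoc)

lemma eval_word_insert_one:
  assumes "u \<in> words_over (carrier G)" "z \<in> words_over (carrier G)" "v \<in> words_over (carrier G)"
    and "eval_word G z = \<one>"
  shows "eval_word G (u @ z @ v) = eval_word G (u @ v)"
  using assms by (simp add: eval_word_append)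

lemma eval_word_subgroup:
  "subgroup H G \<Longrightarrow> w \<in> words_over H \<Longrightarrow> eval_word (G\<lparr>carrier := H\<rparr>) w = eval_word G w"
  by (induction w) (auto simp: letter_val_def)

lemma generate_eq_eval_words:
  assumes "A \<subseteq> carrier G"
  shows "generate G A = eval_word G ` words_over A"
proof
  show "generate G A \<subseteq> eval_word G ` words_over A"
  proof
    fix x assume "x \<in> generate G A"
    then show "x \<in> eval_word G ` words_over A"
    proof (induction rule: generate.induct)
      case one
      show ?case by (rule image_eqI[of _ _ "[]"]) simp_all
    next
      case (incl h)
      then show ?case using assms by (intro image_eqI[of _ _ "[(h, False)]"]) auto
    next
      case (inv h)
      then show ?case using assms by (intro image_eqI[of _ _ "[(h, True)]"]) auto
    next
      case (eng h1 h2)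
      then obtain u1 u2 where "u1 \<in> words_over A" "u2 \<in> words_over A"
        and "h1 = eval_word G u1" "h2 = eval_word G u2" by blast
      then show ?case
        using words_over_mono[OF _ assms]
        by (intro image_eqI[of _ _ "u1 @ u2"]) (simp_all add: eval_word_append)
    qed
  qed
next
  show "eval_word G ` words_over A \<subseteq> generate G A"
  proof clarify
    fix w assume "w \<in> words_over A"
    then show "eval_word G w \<in> generate G A"
    proof (induction w)
      case Nil
      show ?case by (simp add: generate.one)
    next
      case (Cons l w)
      then have "letter_val G l \<in> generate G A"
        by (auto simp: letter_val_def intro: generate.incl generate.inv)
      with Cons show ?case by (auto intro: generate.eng)
    qed
  qed
qed

lemma pres_equiv_imp_eval_eq:
  assumes "A \<subseteq> carrier G" and "R \<subseteq> words_over A" and "\<And>r. r \<in> R \<Longrightarrow> eval_word G r = \<one>"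
    and "pres_equiv R x y" and "x \<in> words_over A" and "y \<in> words_over A"
  shows "eval_word G x = eval_word G y"
proof -
  let ?f = "filter (\<lambda>l. fst l \<in> A)"
  have A_words: "w \<in> words_over (carrier G)" if "w \<in> words_over A" for w
    using that assms(1) by (rule words_over_mono)
  \<comment> \<open>Intermediate words may contain letters outside A; these are filtered out.\<close>
  have "eval_word G (?f x) = eval_word G (?f y)"
  proof (rule pres_equiv_map[OF identity_equivp _ assms(4)])
    fix x y assume "pres_step R x y"
    then show "eval_word G (?f x) = eval_word G (?f y)"
    proof (cases rule: pres_stepE)
      case (cancel u v a b)
      show ?thesis
      proof (cases "a \<in> A")
        case True
        have "eval_word G (?f u @ [(a, b), (a, \<not> b)] @ ?f v) = eval_word G (?f u @ ?f v)"
          by (rule eval_word_insert_one) (use True assms(1) A_words letter_val_cancel in auto)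
        then show ?thesis using cancel True by simp
      qed (use cancel in simp)
    next
      case (relator u v r)
      then have "?f r = r" "eval_word G r = \<one>" "r \<in> words_over (carrier G)"
        using assms(2,3) A_words filter_words_over_id by blast+
      then show ?thesis
        using relator A_words eval_word_insert_one[of "?f u" r "?f v"] by simp
    qed
  qed
  then show ?thesis using filter_words_over_id assms(5,6) by metis
qed

lemma obtain_transversal_in:
  assumes H: "subgroup H G" and "\<one> \<in> S" and meets: "\<forall>C\<in>rcosets H. S \<inter> C \<noteq> {}"
  obtains rep where "\<And>g. g \<in> carrier G \<Longrightarrow> rep g \<in> S"
    "\<And>g. g \<in> carrier G \<Longrightarrow> rep g \<otimes> inv g \<in> H" "\<And>g. g \<in> H \<Longrightarrow> rep g = \<one>"
proof -
  define pick where "pick g = (SOME s. s \<in> S \<inter> (H #> g))" for g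
  have pick: "pick g \<in> S \<and> pick g \<otimes> inv g \<in> H" if g: "g \<in> carrier G" for g
  proof -
    have "H #> g \<in> rcosets H" using g unfolding RCOSETS_def by blast
    then have "\<exists>s. s \<in> S \<inter> (H #> g)" using meets by blast
    then have "pick g \<in> S \<inter> (H #> g)" unfolding pick_def by (rule someI_ex)
    then obtain h where "pick g \<in> S" "h \<in> H" "pick g = h \<otimes> g"
      unfolding r_coset_def by blast
    moreover have "h \<in> carrier G" using \<open>h \<in> H\<close> subgroup.subset[OF H] by blast
    ultimately show ?thesis using g by (simp add: m_assoc)
  qed
  show ?thesis
  proof (rule that[of "\<lambda>g. if g \<in> H then \<one> else pick g"])
    fix g assume "g \<in> carrier G"
    then show "(if g \<in> H then \<one> else pick g) \<in> S"
      and "(if g \<in> H then \<one> else pick g) \<otimes> inv g \<in> H"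
      using pick assms(2) subgroup.m_inv_closed[OF H] by auto
  qed simp
qed

lemma triangle_relators_product:
  assumes "A \<subseteq> carrier G" and "fst x \<in> A" "fst y \<in> A" "fst z \<in> A"
    and "letter_val G x \<otimes> letter_val G y = letter_val G z"
  shows "pres_equiv (triangle_relators G A) [x, y] [z]"
proof -
  obtain a d where z: "z = (a, d)" by fastforce
  let ?r = "[x, y, (a, \<not> d)]"
  have "fst x \<in> carrier G" "fst y \<in> carrier G" "a \<in> carrier G"
    using assms z by auto
  then have "eval_word G ?r = letter_val G z \<otimes> letter_val G (a, \<not> d)"
    using assms(5) by (simp add: m_assoc [symmetric])
  also have "\<dots> = \<one>" using z assms letter_val_cancel by auto
  finally have "?r \<in> triangle_relators G A"
    using assms z by (simp add: triangle_relators_def)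
  then have "pres_equiv (triangle_relators G A) (?r @ [z]) ([] @ [z])"
    by (intro pres_equiv_append pres_equiv_relator pres_equiv_refl)
  moreover have "pres_equiv (triangle_relators G A)
      ([x, y] @ [(a, \<not> d), (a, \<not> \<not> d)]) ([x, y] @ [])"
    by (intro pres_equiv_append pres_equiv_cancel pres_equiv_refl)
  ultimately show ?thesis
    using z pres_equiv_sym pres_equiv_trans by fastforce
qed

lemma triangle_relators_one:
  assumes "\<one> \<in> A"
  shows "pres_equiv (triangle_relators G A) [(\<one>, False)] []"
proof -
  let ?r = "[(\<one>, False), (\<one>, False), (\<one>, True)]"
  have "?r \<in> triangle_relators G A"
    using assms by (simp add: triangle_relators_def)
  then have "pres_equiv (triangle_relators G A) ?r []"
    by (rule pres_equiv_relator)
  moreover have "pres_equiv (triangle_relators G A)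
      ([(\<one>, False)] @ [(\<one>, False), (\<one>, \<not> False)]) ([(\<one>, False)] @ [])"
    by (intro pres_equiv_append pres_equiv_cancel pres_equiv_refl)
  ultimately show ?thesis
    using pres_equiv_sym pres_equiv_trans by fastforce
qed

lemma triangle_relators_length_two:
  assumes "A \<subseteq> carrier G" "\<one> \<in> A"
    and "w \<in> words_over A" "length w = 2" "eval_word G w = \<one>"
  shows "pres_equiv (triangle_relators G A) w []"
proof -
  obtain x y where w: "w = [x, y]"
    using assms(4) by (auto simp: numeral_2_eq_2 length_Suc_conv)
  have "letter_val G x \<otimes> letter_val G y = letter_val G (\<one>, False)"
    using assms w by auto
  then have "pres_equiv (triangle_relators G A) [x, y] [(\<one>, False)]"
    using assms w by (intro triangle_relators_product) auto
  then show ?thesis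
    using triangle_relators_one[OF assms(2)] pres_equiv_trans w by blast
qed

lemma determining_set_subgroupI:
  assumes H: "subgroup H G" and "T \<subseteq> H" "\<one> \<in> T" "H \<subseteq> generate G T"
    and complete: "\<And>w w'. w \<in> words_over T \<Longrightarrow> w' \<in> words_over T \<Longrightarrow>
      eval_word G w = eval_word G w' \<Longrightarrow> pres_equiv (triangle_relators G T) w w'"
  shows "determining_set (G\<lparr>carrier := H\<rparr>) T"
proof -
  have T: "T \<subseteq> carrier G" using assms subgroup.subset by blast
  have gen: "generate (G\<lparr>carrier := H\<rparr>) T = H"
    using generate_consistent[OF assms(2) H] generate_subgroup_incl[OF assms(2) H] assms(4) by auto
  have eval: "eval_word (G\<lparr>carrier := H\<rparr>) w = eval_word G w" if "w \<in> words_over T" for w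
    using eval_word_subgroup[OF H words_over_mono[OF that assms(2)]] .
  have sound: "eval_word G w = eval_word G w'"
    if "pres_equiv (triangle_relators G T) w w'" "w \<in> words_over T" "w' \<in> words_over T" for w w'
    using T _ _ that by (rule pres_equiv_imp_eval_eq) (auto simp: triangle_relators_def)
  have "is_presentation (G\<lparr>carrier := H\<rparr>) T (triangle_relators G T)"
    unfolding is_presentation_def
  proof (intro conjI ballI)
    fix w w' assume "w \<in> words_over T" "w' \<in> words_over T"
    then show "eval_word (G\<lparr>carrier := H\<rparr>) w = eval_word (G\<lparr>carrier := H\<rparr>) w' \<longleftrightarrow>
        pres_equiv (triangle_relators G T) w w'"
      using eval sound complete by metis
  qed (use assms(2) gen in \<open>auto simp: triangle_relators_def\<close>)
  moreover have "\<forall>r \<in> triangle_relators G T. length r = 3"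
    by (simp add: triangle_relators_def)
  ultimately show ?thesis
    unfolding determining_set_def using assms(2,3) gen by auto
qed

end

section \<open>Schreier rewriting into S^3 \<inter> H\<close>

locale schreier_transversal = group G for G (structure) +
  fixes S H :: "'a set" and rep :: "'a \<Rightarrow> 'a"
  assumes subgroup_H: "subgroup H G"
    and S_closed: "S \<subseteq> carrier G"
    and inv_S: "s \<in> S \<Longrightarrow> inv s \<in> S"
    and one_S: "\<one> \<in> S"
    and rep_in_S: "g \<in> carrier G \<Longrightarrow> rep g \<in> S"
    and rep_coset: "g \<in> carrier G \<Longrightarrow> rep g \<otimes> inv g \<in> H"
    and rep_H: "g \<in> H \<Longrightarrow> rep g = \<one>"
begin

definition K :: "'a set" where "K = (S <#> S <#> S) \<inter> H"

definition T :: "'a set" where "T = K <#> K"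

definition schreier_gen :: "'a \<Rightarrow> 'a \<Rightarrow> 'a" where
  "schreier_gen g v = rep g \<otimes> v \<otimes> inv (rep (g \<otimes> v))"

primrec schreier_rewrite :: "'a \<Rightarrow> ('a \<times> bool) list \<Rightarrow> ('a \<times> bool) list" where
  "schreier_rewrite g [] = []"
| "schreier_rewrite g (l # w) =
    (schreier_gen g (letter_val G l), False) # schreier_rewrite (g \<otimes> letter_val G l) w"

lemma H_carrier [simp]: "h \<in> H \<Longrightarrow> h \<in> carrier G"
  using subgroup.subset[OF subgroup_H] by blast

lemma S_carrier [simp]: "s \<in> S \<Longrightarrow> s \<in> carrier G"
  using S_closed by blast

lemma rep_carrier [simp]: "g \<in> carrier G \<Longrightarrow> rep g \<in> carrier G"
  using rep_in_S by simp

lemmas H_one = subgroup.one_closed[OF subgroup_H]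
  and H_m_closed = subgroup.m_closed[OF subgroup_H]
  and H_inv_closed = subgroup.m_inv_closed[OF subgroup_H]

lemma words_S_carrier: "w \<in> words_over S \<Longrightarrow> w \<in> words_over (carrier G)"
  using S_closed by (rule words_over_mono[rotated])

lemma letter_val_in_S: "fst l \<in> S \<Longrightarrow> letter_val G l \<in> S"
  using inv_S by (simp add: letter_val_in_inv_closed)

lemma K_subset_H: "K \<subseteq> H"
  by (auto simp: K_def)

lemma triple_in_K: "a \<in> S \<Longrightarrow> b \<in> S \<Longrightarrow> c \<in> S \<Longrightarrow> a \<otimes> b \<otimes> c \<in> H \<Longrightarrow> a \<otimes> b \<otimes> c \<in> K"
  by (auto simp: K_def set_mult_def)

lemma K_triple: "k \<in> K \<Longrightarrow> \<exists>a\<in>S. \<exists>b\<in>S. \<exists>c\<in>S. k = a \<otimes> b \<otimes> c"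
  by (auto simp: K_def set_mult_def)

lemma one_K: "\<one> \<in> K"
  using triple_in_K[OF one_S one_S one_S] H_one by simp

lemma K_inv_closed: "k \<in> K \<Longrightarrow> inv k \<in> K"
proof -
  assume k: "k \<in> K"
  then obtain a b c where abc: "a \<in> S" "b \<in> S" "c \<in> S" "k = a \<otimes> b \<otimes> c"
    using K_triple by blast
  then have "inv k = inv c \<otimes> inv b \<otimes> inv a"
    by (simp add: inv_mult_group m_assoc)
  moreover have "inv k \<in> H" using k K_subset_H H_inv_closed by blast
  ultimately show ?thesis using triple_in_K abc inv_S by simp
qed

lemma K_subset_T: "K \<subseteq> T"
proof
  fix k assume "k \<in> K"
  then have "k \<otimes> \<one> \<in> K <#> K" using one_K unfolding set_mult_def by blast
  with \<open>k \<in> K\<close> K_subset_H show "k \<in> T" by (auto simp: T_def)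
qed

lemma T_subset_H: "T \<subseteq> H"
  using K_subset_H H_m_closed by (auto simp: T_def set_mult_def)

lemma one_T: "\<one> \<in> T"
  using K_subset_T one_K by blast

lemma T_inv_closed: "t \<in> T \<Longrightarrow> inv t \<in> T"
proof -
  assume "t \<in> T"
  then obtain a b where ab: "a \<in> K" "b \<in> K" "t = a \<otimes> b"
    by (auto simp: T_def set_mult_def)
  moreover have "a \<in> carrier G" "b \<in> carrier G"
    using ab K_subset_H by auto
  ultimately have "inv t = inv b \<otimes> inv a"
    by (simp add: inv_mult_group)
  then show ?thesis
    using ab K_inv_closed unfolding T_def set_mult_def by blast
qed

lemma T_carrier: "T \<subseteq> carrier G"
  using T_subset_H by auto

definition K_word :: "('a \<times> bool) list \<Rightarrow> bool" where
  "K_word u \<longleftrightarrow> u \<in> words_over S \<and> length u = 3 \<and> eval_word G u \<in> H"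

lemma eval_K_word: "K_word u \<Longrightarrow> eval_word G u \<in> K"
proof -
  assume u: "K_word u"
  then obtain l1 l2 l3 where u3: "u = [l1, l2, l3]"
    by (auto simp: K_word_def numeral_3_eq_3 length_Suc_conv)
  then have "letter_val G l1 \<in> S" "letter_val G l2 \<in> S" "letter_val G l3 \<in> S"
    using u letter_val_in_S by (auto simp: K_word_def)
  then show ?thesis
    using u u3 triple_in_K by (simp add: K_word_def m_assoc)
qed

lemma K_word_exists: "k \<in> K \<Longrightarrow> \<exists>u. K_word u \<and> eval_word G u = k"
proof -
  assume k: "k \<in> K"
  then obtain a b c where abc: "a \<in> S" "b \<in> S" "c \<in> S" "k = a \<otimes> b \<otimes> c"
    using K_triple by blast
  then have "K_word [(a, False), (b, False), (c, False)]"
    "eval_word G [(a, False), (b, False), (c, False)] = k"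
    using k K_subset_H by (auto simp: K_word_def m_assoc)
  then show ?thesis by blast
qed

lemma schreier_gen_in_H: "g \<in> carrier G \<Longrightarrow> v \<in> carrier G \<Longrightarrow> schreier_gen g v \<in> H"
proof -
  assume g: "g \<in> carrier G" and v: "v \<in> carrier G"
  have "schreier_gen g v = (rep g \<otimes> inv g) \<otimes> inv (rep (g \<otimes> v) \<otimes> inv (g \<otimes> v))"
    using g v by (simp add: schreier_gen_def inv_mult_group m_assoc)
  then show ?thesis
    using g v rep_coset H_m_closed H_inv_closed by simp
qed

lemma schreier_gen_in_K: "g \<in> carrier G \<Longrightarrow> v \<in> S \<Longrightarrow> schreier_gen g v \<in> K"
  unfolding schreier_gen_def
  by (rule triple_in_K) (auto simp: rep_in_S inv_S schreier_gen_in_H[unfolded schreier_gen_def])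

lemma schreier_gen_mult:
  assumes "g \<in> carrier G" "a \<in> carrier G" "b \<in> carrier G"
  shows "schreier_gen g a \<otimes> schreier_gen (g \<otimes> a) b = schreier_gen g (a \<otimes> b)"
  using assms by (simp add: schreier_gen_def m_assoc)

lemma schreier_gen_one [simp]: "g \<in> carrier G \<Longrightarrow> schreier_gen g \<one> = \<one>"
  by (simp add: schreier_gen_def)

lemma schreier_gen_H: "g \<in> H \<Longrightarrow> g \<otimes> v \<in> H \<Longrightarrow> v \<in> carrier G \<Longrightarrow> schreier_gen g v = v"
  by (simp add: schreier_gen_def rep_H)

lemma schreier_rewrite_in_words_T:
  "g \<in> carrier G \<Longrightarrow> u \<in> words_over S \<Longrightarrow> schreier_rewrite g u \<in> words_over T"
  using K_subset_T
  by (induction u arbitrary: g) (auto simp: schreier_gen_in_K letter_val_in_S subsetD)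

lemma length_schreier_rewrite [simp]: "length (schreier_rewrite g u) = length u"
  by (induction u arbitrary: g) auto

lemma schreier_rewrite_append:
  "g \<in> carrier G \<Longrightarrow> u \<in> words_over S \<Longrightarrow>
    schreier_rewrite g (u @ w) = schreier_rewrite g u @ schreier_rewrite (g \<otimes> eval_word G u) w"
  by (induction u arbitrary: g) (auto simp: letter_val_in_S words_S_carrier m_assoc)

lemma eval_schreier_rewrite:
  "g \<in> carrier G \<Longrightarrow> u \<in> words_over S \<Longrightarrow>
    eval_word G (schreier_rewrite g u) = schreier_gen g (eval_word G u)"
proof (induction u arbitrary: g)
  case Nil
  then show ?case by simp
next
  case (Cons l u)
  then have "letter_val G l \<in> carrier G" "eval_word G u \<in> carrier G"
    using letter_val_in_S words_S_carrier by auto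
  with Cons show ?case by (simp add: schreier_gen_mult)
qed

abbreviation equiv_T :: "('a \<times> bool) list \<Rightarrow> ('a \<times> bool) list \<Rightarrow> bool" where
  "equiv_T \<equiv> pres_equiv (triangle_relators G T)"

lemma equiv_T_product:
  "fst x \<in> T \<Longrightarrow> fst y \<in> T \<Longrightarrow> fst z \<in> T \<Longrightarrow>
    letter_val G x \<otimes> letter_val G y = letter_val G z \<Longrightarrow> equiv_T [x, y] [z]"
  using T_carrier by (rule triangle_relators_product)

lemma schreier_rewrite_K_word:
  assumes g: "g \<in> H" and u: "K_word u" and gu: "g \<otimes> eval_word G u \<in> H"
  shows "equiv_T (schreier_rewrite g u) [(eval_word G u, False)]"
proof -
  obtain l1 l2 l3 where u3: "u = [l1, l2, l3]"
    using u by (auto simp: K_word_def numeral_3_eq_3 length_Suc_conv)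
  define a where "a = letter_val G l1"
  define b where "b = letter_val G l2"
  define c where "c = letter_val G l3"
  have abc: "a \<in> S" "b \<in> S" "c \<in> S"
    using u u3 letter_val_in_S by (auto simp: K_word_def a_def b_def c_def)
  have gc: "g \<in> carrier G" using g by simp
  have eval_u: "eval_word G u = a \<otimes> b \<otimes> c"
    using abc by (simp add: u3 a_def b_def c_def m_assoc)
  let ?x1 = "schreier_gen g a" and ?x2 = "schreier_gen (g \<otimes> a) b"
    and ?x3 = "schreier_gen (g \<otimes> a \<otimes> b) c" and ?e = "schreier_gen g (a \<otimes> b)"
  have rewrite_u: "schreier_rewrite g u = [(?x1, False), (?x2, False)] @ [(?x3, False)]"
    by (simp add: u3 a_def b_def c_def)
  have x_T: "?x1 \<in> T" "?x2 \<in> T" "?x3 \<in> T"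
    using schreier_gen_in_K K_subset_T abc gc by auto
  \<comment> \<open>Since rep g = 1, the first two Schreier generators multiply to an element of S^3.\<close>
  have "?e = a \<otimes> b \<otimes> inv (rep (g \<otimes> (a \<otimes> b)))"
    using g abc by (simp add: schreier_gen_def rep_H)
  moreover have "?e \<in> H" using abc gc by (simp add: schreier_gen_in_H)
  ultimately have e_T: "?e \<in> T"
    using triple_in_K abc rep_in_S inv_S gc K_subset_T by auto
  have "?x1 \<otimes> ?x2 = ?e" using abc gc by (simp add: schreier_gen_mult)
  then have "equiv_T [(?x1, False), (?x2, False)] [(?e, False)]"
    using x_T e_T by (intro equiv_T_product) auto
  then have "equiv_T (schreier_rewrite g u) ([(?e, False)] @ [(?x3, False)])"
    unfolding rewrite_u by (intro pres_equiv_append pres_equiv_refl)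
  moreover have "?e \<otimes> ?x3 = eval_word G u"
    using abc gc g gu eval_u by (simp add: schreier_gen_mult schreier_gen_H m_assoc)
  then have "equiv_T [(?e, False), (?x3, False)] [(eval_word G u, False)]"
    using x_T e_T eval_K_word[OF u] K_subset_T by (intro equiv_T_product) auto
  ultimately show ?thesis by (auto intro: pres_equiv_trans)
qed

definition lift_letter :: "'a \<times> bool \<Rightarrow> ('a \<times> bool) list" where
  "lift_letter l = (SOME u. \<exists>u1 u2. u = u1 @ u2 \<and> K_word u1 \<and> K_word u2 \<and>
      eval_word G u1 \<otimes> eval_word G u2 = letter_val G l)"

lemma lift_letter_split:
  assumes "fst l \<in> T"
  obtains u1 u2 where "lift_letter l = u1 @ u2" "K_word u1" "K_word u2"
    "eval_word G u1 \<otimes> eval_word G u2 = letter_val G l"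
proof -
  have "letter_val G l \<in> T"
    using assms T_inv_closed by (simp add: letter_val_in_inv_closed)
  then obtain k1 k2 where "k1 \<in> K" "k2 \<in> K" "letter_val G l = k1 \<otimes> k2"
    by (auto simp: T_def set_mult_def)
  then have "\<exists>u u1 u2. u = u1 @ u2 \<and> K_word u1 \<and> K_word u2 \<and>
      eval_word G u1 \<otimes> eval_word G u2 = letter_val G l"
    using K_word_exists by metis
  from someI_ex[OF this] show ?thesis
    using that unfolding lift_letter_def by blast
qed

lemma lift_letter:
  assumes "fst l \<in> T"
  shows "lift_letter l \<in> words_over S" "eval_word G (lift_letter l) = letter_val G l"
proof -
  obtain u1 u2 where "lift_letter l = u1 @ u2" "K_word u1" "K_word u2"
    "eval_word G u1 \<otimes> eval_word G u2 = letter_val G l"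
    using lift_letter_split[OF assms] .
  then show "lift_letter l \<in> words_over S" "eval_word G (lift_letter l) = letter_val G l"
    by (auto simp: K_word_def eval_word_append words_S_carrier)
qed

lemma schreier_rewrite_lift_letter:
  assumes g: "g \<in> H" and l: "fst l \<in> T"
  shows "equiv_T (schreier_rewrite g (lift_letter l)) [l]"
proof -
  obtain u1 u2 where split: "lift_letter l = u1 @ u2" and u: "K_word u1" "K_word u2"
    and eval_l: "eval_word G u1 \<otimes> eval_word G u2 = letter_val G l"
    using lift_letter_split[OF l] .
  have e_K: "eval_word G u1 \<in> K" "eval_word G u2 \<in> K"
    using u eval_K_word by auto
  define g1 where "g1 = g \<otimes> eval_word G u1"
  have g1: "g1 \<in> H" "g1 \<otimes> eval_word G u2 \<in> H"
    using g e_K K_subset_H by (auto simp: g1_def intro!: H_m_closed)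
  have "schreier_rewrite g (lift_letter l) = schreier_rewrite g u1 @ schreier_rewrite g1 u2"
    using g u by (simp add: split g1_def schreier_rewrite_append K_word_def)
  moreover have "equiv_T (schreier_rewrite g u1 @ schreier_rewrite g1 u2)
      ([(eval_word G u1, False)] @ [(eval_word G u2, False)])"
    using g g1 u by (intro pres_equiv_append schreier_rewrite_K_word) (auto simp: g1_def)
  moreover have "equiv_T [(eval_word G u1, False), (eval_word G u2, False)] [l]"
    using e_K l eval_l K_subset_T by (intro equiv_T_product) auto
  ultimately show ?thesis by (auto intro: pres_equiv_trans)
qed

definition lift_word :: "('a \<times> bool) list \<Rightarrow> ('a \<times> bool) list" where
  "lift_word w = concat (map lift_letter w)"

lemma lift_word:
  assumes "w \<in> words_over T"
  shows "lift_word w \<in> words_over S" "eval_word G (lift_word w) = eval_word G w"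
  using assms
  by (induction w) (auto simp: lift_word_def lift_letter eval_word_append words_S_carrier)

lemma schreier_rewrite_lift_word:
  "w \<in> words_over T \<Longrightarrow> g \<in> H \<Longrightarrow> equiv_T (schreier_rewrite g (lift_word w)) w"
proof (induction w arbitrary: g)
  case Nil
  then show ?case by (simp add: lift_word_def)
next
  case (Cons l w)
  then have l: "fst l \<in> T" "w \<in> words_over T" and g: "g \<in> H" by auto
  have gl: "g \<otimes> letter_val G l \<in> H"
    using g l T_inv_closed T_subset_H H_m_closed letter_val_in_inv_closed by blast
  have "schreier_rewrite g (lift_word (l # w)) =
      schreier_rewrite g (lift_letter l) @ schreier_rewrite (g \<otimes> letter_val G l) (lift_word w)"
    using g l by (simp add: lift_word_def schreier_rewrite_append lift_letter)
  moreover have "equiv_T (schreier_rewrite g (lift_letter l) @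
      schreier_rewrite (g \<otimes> letter_val G l) (lift_word w)) ([l] @ w)"
    using g l gl Cons.IH by (intro pres_equiv_append schreier_rewrite_lift_letter) auto
  ultimately show ?case by simp
qed

end

locale schreier_presentation = schreier_transversal +
  fixes R :: "('a \<times> bool) list set"
  assumes presentation: "is_presentation G S R"
    and relator_length: "r \<in> R \<Longrightarrow> length r = 3"
begin

lemma schreier_rewrite_trivial:
  assumes "g \<in> carrier G" "z \<in> words_over S" "eval_word G z = \<one>" "length z = 2 \<or> length z = 3"
  shows "equiv_T (schreier_rewrite g z) []"
proof -
  have z: "schreier_rewrite g z \<in> words_over T" "eval_word G (schreier_rewrite g z) = \<one>"
    using assms by (simp_all add: schreier_rewrite_in_words_T eval_schreier_rewrite)
  from assms(4) show ?thesis
  proof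
    assume "length z = 2"
    then show ?thesis
      using z T_carrier one_T by (intro triangle_relators_length_two) auto
  next
    assume "length z = 3"
    then show ?thesis
      using z by (intro pres_equiv_relator) (simp add: triangle_relators_def)
  qed
qed

lemma schreier_rewrite_delete:
  assumes g: "g \<in> carrier G" and words: "u \<in> words_over S" "z \<in> words_over S" "v \<in> words_over S"
    and "eval_word G z = \<one>" "length z = 2 \<or> length z = 3"
  shows "equiv_T (schreier_rewrite g (u @ z @ v)) (schreier_rewrite g (u @ v))"
proof -
  let ?g = "g \<otimes> eval_word G u"
  have "?g \<in> carrier G" using g words words_S_carrier by simp
  moreover have "schreier_rewrite g (u @ z @ v) =
      schreier_rewrite g u @ schreier_rewrite ?g z @ schreier_rewrite ?g v"
    using assms calculation by (simp add: schreier_rewrite_append)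
  moreover have "schreier_rewrite g (u @ v) = schreier_rewrite g u @ [] @ schreier_rewrite ?g v"
    using assms by (simp add: schreier_rewrite_append)
  ultimately show ?thesis
    using assms by (simp only:) (intro pres_equiv_append pres_equiv_refl schreier_rewrite_trivial)
qed

lemma schreier_rewrite_pres_step:
  assumes "pres_step R x y" and g: "g \<in> carrier G"
  shows "equiv_T (schreier_rewrite g (filter (\<lambda>l. fst l \<in> S) x))
    (schreier_rewrite g (filter (\<lambda>l. fst l \<in> S) y))"
  using assms(1)
proof (cases rule: pres_stepE)
  case (cancel u v a b)
  let ?f = "filter (\<lambda>l. fst l \<in> S)"
  show ?thesis
  proof (cases "a \<in> S")
    case True
    have "equiv_T (schreier_rewrite g (?f u @ [(a, b), (a, \<not> b)] @ ?f v))
        (schreier_rewrite g (?f u @ ?f v))"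
      using True g letter_val_cancel by (intro schreier_rewrite_delete) auto
    then show ?thesis using cancel True by simp
  qed (use cancel in simp)
next
  case (relator u v r)
  let ?f = "filter (\<lambda>l. fst l \<in> S)"
  have r: "r \<in> words_over S" "eval_word G r = \<one>" "length r = 3"
    using relator presentation presentation_relator_eval relator_length
    by (auto simp: is_presentation_def)
  then have "equiv_T (schreier_rewrite g (?f u @ r @ ?f v)) (schreier_rewrite g (?f u @ ?f v))"
    using g by (intro schreier_rewrite_delete) auto
  then show ?thesis using relator filter_words_over_id[OF r(1)] by simp
qed

lemma schreier_rewrite_pres_equiv:
  assumes "pres_equiv R x y" "g \<in> carrier G"
  shows "equiv_T (schreier_rewrite g (filter (\<lambda>l. fst l \<in> S) x))
    (schreier_rewrite g (filter (\<lambda>l. fst l \<in> S) y))"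
  using equivp_pres_equiv _ assms(1)
  by (rule pres_equiv_map) (rule schreier_rewrite_pres_step[OF _ assms(2)])

lemma T_presentation_complete:
  assumes w: "w \<in> words_over T" "w' \<in> words_over T" and "eval_word G w = eval_word G w'"
  shows "equiv_T w w'"
proof -
  have lift: "lift_word w \<in> words_over S" "lift_word w' \<in> words_over S"
    "eval_word G (lift_word w) = eval_word G (lift_word w')"
    using lift_word w assms(3) by auto
  then have "pres_equiv R (lift_word w) (lift_word w')"
    using presentation unfolding is_presentation_def by blast
  then have "equiv_T (schreier_rewrite \<one> (filter (\<lambda>l. fst l \<in> S) (lift_word w)))
      (schreier_rewrite \<one> (filter (\<lambda>l. fst l \<in> S) (lift_word w')))"
    by (rule schreier_rewrite_pres_equiv) simp
  then have "equiv_T (schreier_rewrite \<one> (lift_word w)) (schreier_rewrite \<one> (lift_word w'))"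
    by (simp add: filter_words_over_id lift)
  moreover have "equiv_T (schreier_rewrite \<one> (lift_word w)) w"
    "equiv_T (schreier_rewrite \<one> (lift_word w')) w'"
    using schreier_rewrite_lift_word H_one w by auto
  ultimately show ?thesis
    by (meson pres_equiv_sym pres_equiv_trans)
qed

lemma H_subset_generate_T: "H \<subseteq> generate G T"
proof
  fix h assume h: "h \<in> H"
  have "generate G S = carrier G" using presentation by (simp add: is_presentation_def)
  then have "h \<in> eval_word G ` words_over S"
    using generate_eq_eval_words[OF S_closed] h by simp
  then obtain u where u: "u \<in> words_over S" "eval_word G u = h" by blast
  then have "eval_word G (schreier_rewrite \<one> u) = h"
    using h H_one by (simp add: eval_schreier_rewrite schreier_gen_H)
  then show "h \<in> generate G T"
    using generate_eq_eval_words[OF T_carrier] schreier_rewrite_in_words_T u by auto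
qed

theorem determining_set_T: "determining_set (G\<lparr>carrier := H\<rparr>) T"
  using subgroup_H T_subset_H one_T H_subset_generate_T T_presentation_complete
  by (rule determining_set_subgroupI)

end

theorem mainTheorem16:
  fixes G :: "('a, 'b) monoid_scheme" and S H :: "'a set"
  assumes "group G"
    and "S \<subseteq> carrier G"
    and "\<forall>s\<in>S. inv\<^bsub>G\<^esub> s \<in> S"
    and "determining_set G S"
    and "H \<lhd> G"
    and "finite (rcosets\<^bsub>G\<^esub> H)"
    and "\<forall>C\<in>rcosets\<^bsub>G\<^esub> H. S \<inter> C \<noteq> {}"
  shows "determining_set (G\<lparr>carrier := H\<rparr>)
           (((S <#>\<^bsub>G\<^esub> S <#>\<^bsub>G\<^esub> S) \<inter> H) <#>\<^bsub>G\<^esub> ((S <#>\<^bsub>G\<^esub> S <#>\<^bsub>G\<^esub> S) \<inter> H))"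
proof -
  interpret group G by fact
  obtain R where one_S: "\<one>\<^bsub>G\<^esub> \<in> S" and R: "is_presentation G S R" "\<forall>r\<in>R. length r = 3"
    using assms(4) unfolding determining_set_def by blast
  have H: "subgroup H G" using assms(5) by (rule normal_imp_subgroup)
  obtain rep where "\<And>g. g \<in> carrier G \<Longrightarrow> rep g \<in> S"
    "\<And>g. g \<in> carrier G \<Longrightarrow> rep g \<otimes>\<^bsub>G\<^esub> inv\<^bsub>G\<^esub> g \<in> H" "\<And>g. g \<in> H \<Longrightarrow> rep g = \<one>\<^bsub>G\<^esub>"
    using obtain_transversal_in[OF H one_S assms(7)] by blast
  then interpret schreier_presentation G S H rep R
    using assms(1-3) one_S R H
    by (intro schreier_presentation.intro schreier_transversal.intro
        schreier_transversal_axioms.intro schreier_presentation_axioms.intro) auto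
  show ?thesis
    using determining_set_T by (simp add: T_def K_def)
qed

end
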